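(* Let $(X,d)$ be a u.l.f. metric space and $h\colon X\to\mathbb{R}$ a coarse map. Then the action $\sigma_h$ of $\mathbb{R}$ on $\mathrm{C}^*_u(X)$ given by $\sigma_{h,t}(a)=e^{it\bar h}ae^{-it\bar h}$ is strongly continuous, i.e., $t\mapsto\sigma_{h,t}(a)\in\mathrm{C}^*_u(X)$ is norm continuous for all $a\in\mathrm{C}^*_u(X)$.
   Context: A metric space is u.l.f. if for every $r>0$ the cardinalities of its balls of radius $r$ are uniformly bounded. $\mathrm{C}^*_u(X)$ is the norm closure of the $^*$-algebra of operators $a$ on $\ell_2(X)$ with $\sup\{d(x,y):\langle a\delta_y,\delta_x\rangle\neq0\}<\infty$. $h$ is coarse if for each $r>0$ there is $s>0$ with $d(x,y)<r\Rightarrow|h(x)-h(y)|<s$. $e^{it\bar h}$ is the diagonal unitary $\delta_x\mapsto e^{ith(x)}\delta_x$. *)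

theory Defs
  imports "HOL-Analysis.Analysis"
begin

text \<open>Operators on \<ell>2(X) are represented as maps on all functions; only their behaviour on
  \<ell>2(X) matters.\<close>

definition in_ell2 :: "('a \<Rightarrow> complex) \<Rightarrow> bool" where
  "in_ell2 f \<longleftrightarrow> (\<lambda>x. (cmod (f x))\<^sup>2) summable_on UNIV"

definition ell2_norm :: "('a \<Rightarrow> complex) \<Rightarrow> real" where
  "ell2_norm f = sqrt (\<Sum>\<^sub>\<infinity>x. (cmod (f x))\<^sup>2)"

definition delta :: "'a \<Rightarrow> 'a \<Rightarrow> complex" where
  "delta y = (\<lambda>z. if z = y then 1 else 0)"

definition bounded_op :: "(('a \<Rightarrow> complex) \<Rightarrow> ('a \<Rightarrow> complex)) \<Rightarrow> bool" where
  "bounded_op a \<longleftrightarrow>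
     (\<forall>f. in_ell2 f \<longrightarrow> in_ell2 (a f)) \<and>
     (\<forall>f g c. in_ell2 f \<longrightarrow> in_ell2 g \<longrightarrow>
        a (\<lambda>x. f x + c * g x) = (\<lambda>x. a f x + c * a g x)) \<and>
     (\<exists>C. \<forall>f. in_ell2 f \<longrightarrow> ell2_norm (a f) \<le> C * ell2_norm f)"

definition op_norm :: "(('a \<Rightarrow> complex) \<Rightarrow> ('a \<Rightarrow> complex)) \<Rightarrow> real" where
  "op_norm a = (SUP f\<in>{f. in_ell2 f \<and> ell2_norm f \<le> 1}. ell2_norm (a f))"

definition op_diff ::
  "(('a \<Rightarrow> complex) \<Rightarrow> ('a \<Rightarrow> complex)) \<Rightarrow> (('a \<Rightarrow> complex) \<Rightarrow> ('a \<Rightarrow> complex))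
    \<Rightarrow> (('a \<Rightarrow> complex) \<Rightarrow> ('a \<Rightarrow> complex))" where
  "op_diff a b = (\<lambda>f x. a f x - b f x)"

text \<open>Finite propagation: sup of d(x,y) over nonzero matrix entries
  \<langle>a \<delta>_y, \<delta>_x\<rangle> = (a (delta y)) x is finite.\<close>
definition finite_propagation :: "(('a::metric_space \<Rightarrow> complex) \<Rightarrow> ('a \<Rightarrow> complex)) \<Rightarrow> bool" where
  "finite_propagation a \<longleftrightarrow> (\<exists>R. \<forall>x y. a (delta y) x \<noteq> 0 \<longrightarrow> dist x y \<le> R)"

definition uniform_roe :: "(('a::metric_space \<Rightarrow> complex) \<Rightarrow> ('a \<Rightarrow> complex)) set" where
  "uniform_roe = {a. bounded_op a \<and>
     (\<forall>\<epsilon>>0. \<exists>b. bounded_op b \<and> finite_propagation b \<and> op_norm (op_diff a b) < \<epsilon>)}"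

definition ulf :: "'a::metric_space itself \<Rightarrow> bool" where
  "ulf _ \<longleftrightarrow> (\<forall>r>0. \<exists>N::nat. \<forall>x::'a. finite (ball x r) \<and> card (ball x r) \<le> N)"

definition coarse_fun :: "('a::metric_space \<Rightarrow> real) \<Rightarrow> bool" where
  "coarse_fun h \<longleftrightarrow> (\<forall>r>0. \<exists>s>0. \<forall>x y. dist x y < r \<longrightarrow> \<bar>h x - h y\<bar> < s)"

definition exp_diag :: "('a \<Rightarrow> real) \<Rightarrow> real \<Rightarrow> ('a \<Rightarrow> complex) \<Rightarrow> ('a \<Rightarrow> complex)" where
  "exp_diag h t = (\<lambda>f x. exp (\<i> * complex_of_real (t * h x)) * f x)"

definition sigma :: "('a \<Rightarrow> real) \<Rightarrow> real \<Rightarrow> (('a \<Rightarrow> complex) \<Rightarrow> ('a \<Rightarrow> complex))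
    \<Rightarrow> (('a \<Rightarrow> complex) \<Rightarrow> ('a \<Rightarrow> complex))" where
  "sigma h t a = exp_diag h t \<circ> a \<circ> exp_diag h (- t)"

end

theory Submission
  imports Defs
begin

(*
  An operator b of propagation at most R has matrix entries b_xy vanishing for d(x,y) > R,
  and the matrix of sigma_t(b) - sigma_t0(b) has entries
  (e^(i t (h x - h y)) - e^(i t0 (h x - h y))) b_xy.  Coarseness bounds |h x - h y| on these
  entries, so they are O(|t - t0|), and uniform local finiteness bounds the number of nonzero
  entries in each row and column; a Schur-type estimate then gives
  norm (sigma_t(b) - sigma_t0(b)) = O(|t - t0|).  Since each sigma_t is conjugation by a unitary,
  it preserves distances, so approximating a within epsilon/3 by such a b gives continuity at t0
  and also shows that sigma_t maps the uniform Roe algebra into itself.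
*)

lemma ell2_norm_nonneg: "ell2_norm f \<ge> 0"
  unfolding ell2_norm_def by (simp add: infsum_nonneg)

lemma sum_power2_le_ell2_norm:
  assumes "in_ell2 g" "finite G"
  shows "(\<Sum>x\<in>G. (cmod (g x))\<^sup>2) \<le> (ell2_norm g)\<^sup>2"
proof -
  have "(\<Sum>x\<in>G. (cmod (g x))\<^sup>2) \<le> (\<Sum>\<^sub>\<infinity>x. (cmod (g x))\<^sup>2)"
    using assms by (intro finite_sum_le_infsum) (auto simp: in_ell2_def)
  also have "\<dots> = (ell2_norm g)\<^sup>2"
    unfolding ell2_norm_def by (simp add: infsum_nonneg)
  finally show ?thesis .
qed

lemma norm_le_ell2_norm: "in_ell2 g \<Longrightarrow> cmod (g x) \<le> ell2_norm g"
proof -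
  assume "in_ell2 g"
  then have "(cmod (g x))\<^sup>2 \<le> (ell2_norm g)\<^sup>2"
    using sum_power2_le_ell2_norm[of g "{x}"] by simp
  then show ?thesis
    using ell2_norm_nonneg[of g] by (rule power2_le_imp_le)
qed

lemma ell2_norm_le_if_finite_sums_le:
  assumes "K \<ge> 0" "\<And>G. finite G \<Longrightarrow> (\<Sum>x\<in>G. (cmod (g x))\<^sup>2) \<le> K\<^sup>2"
  shows "in_ell2 g \<and> ell2_norm g \<le> K"
proof
  show g: "in_ell2 g"
    unfolding in_ell2_def
    using assms(2) by (intro nonneg_bdd_above_summable_on bdd_aboveI[of _ "K\<^sup>2"]) auto
  have "(\<Sum>\<^sub>\<infinity>x. (cmod (g x))\<^sup>2) \<le> K\<^sup>2"
    using g assms by (intro infsum_le_finite_sums) (auto simp: in_ell2_def)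
  then have "ell2_norm g \<le> sqrt (K\<^sup>2)"
    unfolding ell2_norm_def by (rule real_sqrt_le_mono)
  with assms(1) show "ell2_norm g \<le> K"
    by simp
qed

lemma ell2_norm_le_add_if_dominated:
  assumes "in_ell2 u" "in_ell2 v" "\<And>x. cmod (w x) \<le> cmod (u x) + cmod (v x)"
  shows "in_ell2 w \<and> ell2_norm w \<le> ell2_norm u + ell2_norm v"
proof (rule ell2_norm_le_if_finite_sums_le)
  show "0 \<le> ell2_norm u + ell2_norm v"
    by (simp add: ell2_norm_nonneg add_nonneg_nonneg)
  fix G :: "'a set" assume G: "finite G"
  have L2_le: "L2_set (\<lambda>x. cmod (g x)) G \<le> ell2_norm g" if "in_ell2 g" for g :: "'a \<Rightarrow> complex"
    using sum_power2_le_ell2_norm[OF that G] ell2_norm_nonneg[of g]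
    unfolding L2_set_def by (simp add: real_le_lsqrt sum_nonneg)
  have "L2_set (\<lambda>x. cmod (w x)) G \<le> L2_set (\<lambda>x. cmod (u x) + cmod (v x)) G"
    using assms by (intro L2_set_mono) auto
  also have "\<dots> \<le> L2_set (\<lambda>x. cmod (u x)) G + L2_set (\<lambda>x. cmod (v x)) G"
    by (rule L2_set_triangle_ineq)
  also have "\<dots> \<le> ell2_norm u + ell2_norm v"
    using L2_le assms by (simp add: add_mono)
  finally show "(\<Sum>x\<in>G. (cmod (w x))\<^sup>2) \<le> (ell2_norm u + ell2_norm v)\<^sup>2"
    unfolding L2_set_def by (rule sqrt_le_D)
qed

lemma ell2_norm_eq_if_norm_eq:
  assumes "in_ell2 u" "\<And>x. cmod (w x) = cmod (u x)"
  shows "in_ell2 w \<and> ell2_norm w = ell2_norm u"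
  using assms unfolding in_ell2_def ell2_norm_def by simp

lemma in_ell2_finite_support:
  assumes "finite S" "\<And>x. x \<notin> S \<Longrightarrow> f x = 0"
  shows "in_ell2 f"
proof -
  have "in_ell2 f \<and> ell2_norm f \<le> sqrt (\<Sum>x\<in>S. (cmod (f x))\<^sup>2)"
  proof (rule ell2_norm_le_if_finite_sums_le)
    fix G :: "'a set" assume G: "finite G"
    have "(\<Sum>x\<in>G. (cmod (f x))\<^sup>2) = (\<Sum>x\<in>G \<inter> S. (cmod (f x))\<^sup>2)"
      using G assms by (intro sum.mono_neutral_right) auto
    also have "\<dots> \<le> (\<Sum>x\<in>S. (cmod (f x))\<^sup>2)"
      using assms by (intro sum_mono2) auto
    finally show "(\<Sum>x\<in>G. (cmod (f x))\<^sup>2) \<le> (sqrt (\<Sum>x\<in>S. (cmod (f x))\<^sup>2))\<^sup>2"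
      by (simp add: sum_nonneg)
  qed (simp add: sum_nonneg)
  then show ?thesis ..
qed

lemma in_ell2_zero: "in_ell2 (\<lambda>x. 0)"
  unfolding in_ell2_def by simp

lemma in_ell2_delta: "in_ell2 (delta y)"
  by (rule in_ell2_finite_support[of "{y}"]) (simp_all add: delta_def)

lemma ell2_norm_delta: "ell2_norm (delta y) = 1"
proof -
  have "(\<Sum>\<^sub>\<infinity>x. (cmod (delta y x))\<^sup>2) = (\<Sum>\<^sub>\<infinity>x\<in>{y}. 1)"
    by (rule infsum_cong_neutral) (auto simp: delta_def)
  then show ?thesis
    unfolding ell2_norm_def by simp
qed

lemma exp_diag_isometric:
  assumes "in_ell2 f"
  shows "in_ell2 (exp_diag h t f) \<and> ell2_norm (exp_diag h t f) = ell2_norm f"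
  by (rule ell2_norm_eq_if_norm_eq[OF assms]) (simp add: exp_diag_def norm_mult)

lemma bounded_op_in_ell2: "bounded_op b \<Longrightarrow> in_ell2 f \<Longrightarrow> in_ell2 (b f)"
  unfolding bounded_op_def by blast

lemma bounded_op_linear:
  "bounded_op b \<Longrightarrow> in_ell2 f \<Longrightarrow> in_ell2 g \<Longrightarrow> b (\<lambda>x. f x + c * g x) = (\<lambda>x. b f x + c * b g x)"
  unfolding bounded_op_def by blast

lemma bounded_op_zero:
  assumes "bounded_op b"
  shows "b (\<lambda>x. 0) = (\<lambda>x. 0)"
proof -
  have "b (\<lambda>x. 0 + 1 * 0) = (\<lambda>x. b (\<lambda>x. 0) x + 1 * b (\<lambda>x. 0) x)"
    by (rule bounded_op_linear[OF assms in_ell2_zero in_ell2_zero])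
  then have "b (\<lambda>x. 0) x = b (\<lambda>x. 0) x + b (\<lambda>x. 0) x" for x
    by (metis add_0 mult_1 mult_zero_right)
  then show ?thesis
    by auto
qed

lemma bounded_op_scale:
  assumes "bounded_op b" "in_ell2 g"
  shows "b (\<lambda>x. c * g x) = (\<lambda>x. c * b g x)"
  using bounded_op_linear[OF assms(1) in_ell2_zero assms(2), of c] bounded_op_zero[OF assms(1)]
  by simp

lemma bounded_op_bound:
  assumes "bounded_op b"
  obtains C where "C \<ge> 0" "\<And>f. in_ell2 f \<Longrightarrow> ell2_norm (b f) \<le> C * ell2_norm f"
proof -
  obtain C where C: "\<And>f. in_ell2 f \<Longrightarrow> ell2_norm (b f) \<le> C * ell2_norm f"
    using assms unfolding bounded_op_def by blast
  have "ell2_norm (b f) \<le> max C 0 * ell2_norm f" if "in_ell2 f" for f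
    using C[OF that] ell2_norm_nonneg[of f] by (meson max.cobounded1 mult_right_mono order_trans)
  then show ?thesis
    using that[of "max C 0"] by simp
qed

lemma op_norm_le:
  assumes "\<And>f. in_ell2 f \<Longrightarrow> ell2_norm f \<le> 1 \<Longrightarrow> ell2_norm (A f) \<le> K"
  shows "op_norm A \<le> K"
  unfolding op_norm_def
proof (rule cSUP_least)
  show "{f. in_ell2 f \<and> ell2_norm f \<le> 1} \<noteq> {}"
    using in_ell2_zero by (auto intro!: exI[of _ "\<lambda>x. 0"] simp: ell2_norm_def)
qed (use assms in auto)

lemma ell2_norm_le_op_norm:
  assumes "bounded_op A" "in_ell2 f" "ell2_norm f \<le> 1"
  shows "ell2_norm (A f) \<le> op_norm A"
proof -
  obtain C where C: "C \<ge> 0" "\<And>f. in_ell2 f \<Longrightarrow> ell2_norm (A f) \<le> C * ell2_norm f"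
    using bounded_op_bound[OF assms(1)] by blast
  have "ell2_norm (A g) \<le> C" if "in_ell2 g" "ell2_norm g \<le> 1" for g
    using C(2)[OF that(1)] mult_left_mono[OF that(2) C(1)] by simp
  then have "bdd_above ((\<lambda>f. ell2_norm (A f)) ` {f. in_ell2 f \<and> ell2_norm f \<le> 1})"
    by (intro bdd_aboveI[of _ C]) auto
  then show ?thesis
    unfolding op_norm_def using assms(2,3) by (intro cSUP_upper) auto
qed

lemma norm_matrix_entry_le_op_norm:
  assumes "bounded_op b"
  shows "cmod (b (delta y) x) \<le> op_norm b"
proof -
  have "cmod (b (delta y) x) \<le> ell2_norm (b (delta y))"
    using norm_le_ell2_norm[OF bounded_op_in_ell2[OF assms in_ell2_delta]] .
  also have "\<dots> \<le> op_norm b"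
    using assms in_ell2_delta by (rule ell2_norm_le_op_norm) (simp add: ell2_norm_delta)
  finally show ?thesis .
qed

lemma op_norm_nonneg: "bounded_op b \<Longrightarrow> 0 \<le> op_norm b"
  by (rule order_trans[OF norm_ge_zero norm_matrix_entry_le_op_norm])

lemma bounded_op_op_diff:
  assumes "bounded_op a" "bounded_op b"
  shows "bounded_op (op_diff a b)"
proof -
  obtain C1 where C1: "\<And>f. in_ell2 f \<Longrightarrow> ell2_norm (a f) \<le> C1 * ell2_norm f"
    using bounded_op_bound[OF assms(1)] by blast
  obtain C2 where C2: "\<And>f. in_ell2 f \<Longrightarrow> ell2_norm (b f) \<le> C2 * ell2_norm f"
    using bounded_op_bound[OF assms(2)] by blast
  have diff: "in_ell2 (op_diff a b f) \<and> ell2_norm (op_diff a b f) \<le> ell2_norm (a f) + ell2_norm (b f)"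
    if "in_ell2 f" for f
    using bounded_op_in_ell2[OF assms(1) that] bounded_op_in_ell2[OF assms(2) that]
    by (rule ell2_norm_le_add_if_dominated) (simp add: op_diff_def norm_triangle_ineq4)
  have "ell2_norm (op_diff a b f) \<le> (C1 + C2) * ell2_norm f" if "in_ell2 f" for f
    using diff[OF that] C1[OF that] C2[OF that] by (simp add: distrib_right)
  moreover have "op_diff a b (\<lambda>x. f x + c * g x) = (\<lambda>x. op_diff a b f x + c * op_diff a b g x)"
    if "in_ell2 f" "in_ell2 g" for f g c
    using that assms by (simp add: op_diff_def bounded_op_linear algebra_simps)
  ultimately show ?thesis
    unfolding bounded_op_def using diff by blast
qed

lemma op_norm_diff_commute: "op_norm (op_diff a b) = op_norm (op_diff b a)"
  unfolding op_norm_def op_diff_def ell2_norm_def by (simp add: norm_minus_commute)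

lemma op_norm_diff_triangle:
  assumes "bounded_op a" "bounded_op b" "bounded_op c"
  shows "op_norm (op_diff a c) \<le> op_norm (op_diff a b) + op_norm (op_diff b c)"
proof (rule op_norm_le)
  fix f :: "'a \<Rightarrow> complex" assume f: "in_ell2 f" "ell2_norm f \<le> 1"
  have "cmod (op_diff a c f x) \<le> cmod (op_diff a b f x) + cmod (op_diff b c f x)" for x
    using norm_triangle_ineq[of "a f x - b f x" "b f x - c f x"] by (simp add: op_diff_def)
  then have "ell2_norm (op_diff a c f) \<le> ell2_norm (op_diff a b f) + ell2_norm (op_diff b c f)"
    using bounded_op_in_ell2[OF bounded_op_op_diff[OF assms(1,2)] f(1)]
      bounded_op_in_ell2[OF bounded_op_op_diff[OF assms(2,3)] f(1)]
    by (intro ell2_norm_le_add_if_dominated[THEN conjunct2])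
  also have "\<dots> \<le> op_norm (op_diff a b) + op_norm (op_diff b c)"
    using f assms by (intro add_mono ell2_norm_le_op_norm bounded_op_op_diff) auto
  finally show "ell2_norm (op_diff a c f) \<le> op_norm (op_diff a b) + op_norm (op_diff b c)" .
qed

lemma sigma_apply: "sigma h t a f x = exp (\<i> * complex_of_real (t * h x)) * a (exp_diag h (- t) f) x"
  by (simp add: sigma_def exp_diag_def)

lemma op_diff_sigma: "op_diff (sigma h t a) (sigma h t b) = sigma h t (op_diff a b)"
  by (simp add: fun_eq_iff sigma_apply op_diff_def algebra_simps)

lemma bounded_op_sigma:
  assumes "bounded_op a"
  shows "bounded_op (sigma h t a)"
proof -
  obtain C where C: "\<And>f. in_ell2 f \<Longrightarrow> ell2_norm (a f) \<le> C * ell2_norm f"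
    using bounded_op_bound[OF assms] by blast
  have "in_ell2 (sigma h t a f) \<and> ell2_norm (sigma h t a f) \<le> C * ell2_norm f" if f: "in_ell2 f" for f
  proof -
    have e: "in_ell2 (exp_diag h (-t) f)" "ell2_norm (exp_diag h (-t) f) = ell2_norm f"
      using exp_diag_isometric[OF f] by auto
    have "sigma h t a f = exp_diag h t (a (exp_diag h (-t) f))"
      by (simp add: sigma_def)
    then show ?thesis
      using exp_diag_isometric[OF bounded_op_in_ell2[OF assms e(1)], of h t] C[OF e(1)] e(2) by simp
  qed
  moreover have "sigma h t a (\<lambda>x. f x + c * g x) = (\<lambda>x. sigma h t a f x + c * sigma h t a g x)"
    if "in_ell2 f" "in_ell2 g" for f g c
  proof -
    have exp_diag_linear: "exp_diag h s (\<lambda>x. u x + c * v x) = (\<lambda>x. exp_diag h s u x + c * exp_diag h s v x)"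
      for s u v
      by (simp add: exp_diag_def algebra_simps)
    show ?thesis
      using bounded_op_linear[OF assms exp_diag_isometric[OF that(1), THEN conjunct1]
          exp_diag_isometric[OF that(2), THEN conjunct1]]
      by (simp add: sigma_def exp_diag_linear)
  qed
  ultimately show ?thesis
    unfolding bounded_op_def by blast
qed

lemma op_norm_sigma_le:
  assumes "bounded_op a"
  shows "op_norm (sigma h t a) \<le> op_norm a"
proof (rule op_norm_le)
  fix f :: "'a \<Rightarrow> complex" assume f: "in_ell2 f" "ell2_norm f \<le> 1"
  have e: "in_ell2 (exp_diag h (-t) f)" "ell2_norm (exp_diag h (-t) f) = ell2_norm f"
    using exp_diag_isometric[OF f(1)] by auto
  have "ell2_norm (sigma h t a f) = ell2_norm (a (exp_diag h (- t) f))"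
    using exp_diag_isometric[OF bounded_op_in_ell2[OF assms e(1)]] by (simp add: sigma_def)
  also have "\<dots> \<le> op_norm a"
    using e f assms by (intro ell2_norm_le_op_norm) auto
  finally show "ell2_norm (sigma h t a f) \<le> op_norm a" .
qed

lemma finite_propagation_sigma:
  assumes "bounded_op b" "finite_propagation b"
  shows "finite_propagation (sigma h t b)"
proof -
  obtain R where R: "\<And>x y. b (delta y) x \<noteq> 0 \<Longrightarrow> dist x y \<le> R"
    using assms(2) unfolding finite_propagation_def by blast
  have "exp_diag h (- t) (delta y) = (\<lambda>z. exp (\<i> * complex_of_real (- t * h y)) * delta y z)" for y
    by (auto simp: exp_diag_def delta_def)
  then have "sigma h t b (delta y) x
      = exp (\<i> * complex_of_real (t * h x)) * (exp (\<i> * complex_of_real (- t * h y)) * b (delta y) x)"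
    for x y
    by (simp add: sigma_apply bounded_op_scale[OF assms(1) in_ell2_delta])
  then show ?thesis
    unfolding finite_propagation_def using R by (intro exI[of _ R]) auto
qed

lemma sigma_uniform_roe:
  assumes "a \<in> uniform_roe"
  shows "sigma h t a \<in> uniform_roe"
proof -
  have a: "bounded_op a"
    using assms by (simp add: uniform_roe_def)
  have "\<exists>b. bounded_op b \<and> finite_propagation b \<and> op_norm (op_diff (sigma h t a) b) < \<epsilon>"
    if "\<epsilon> > 0" for \<epsilon>
  proof -
    obtain b where b: "bounded_op b" "finite_propagation b" "op_norm (op_diff a b) < \<epsilon>"
      using assms \<open>\<epsilon> > 0\<close> unfolding uniform_roe_def by blast
    have "op_norm (op_diff (sigma h t a) (sigma h t b)) \<le> op_norm (op_diff a b)"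
      unfolding op_diff_sigma using a b by (intro op_norm_sigma_le bounded_op_op_diff)
    then show ?thesis
      using b by (intro exI[of _ "sigma h t b"]) (auto simp: bounded_op_sigma finite_propagation_sigma)
  qed
  then show ?thesis
    using a bounded_op_sigma unfolding uniform_roe_def by blast
qed

lemma bounded_op_finite_sum:
  assumes "bounded_op b" "finite F"
  shows "b (\<lambda>z. \<Sum>y\<in>F. f y * delta y z) = (\<lambda>x. \<Sum>y\<in>F. f y * b (delta y) x)"
  using assms(2)
proof (induction F rule: finite_induct)
  case empty
  then show ?case
    using bounded_op_zero[OF assms(1)] by simp
next
  case (insert y F)
  have "in_ell2 (\<lambda>z. \<Sum>y\<in>F. f y * delta y z)"
    by (rule in_ell2_finite_support[OF insert(1)]) (auto simp: delta_def intro!: sum.neutral)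
  then have "b (\<lambda>z. (\<Sum>y\<in>F. f y * delta y z) + f y * delta y z)
      = (\<lambda>x. b (\<lambda>z. \<Sum>y\<in>F. f y * delta y z) x + f y * b (delta y) x)"
    by (rule bounded_op_linear[OF assms(1) _ in_ell2_delta])
  then show ?case
    using insert by (simp add: add.commute)
qed

lemma ell2_norm_tail_le:
  assumes "in_ell2 f" "e > 0"
  obtains X where "finite X"
    "\<And>F. finite F \<Longrightarrow> X \<subseteq> F \<Longrightarrow>
      in_ell2 (\<lambda>z. if z \<in> F then 0 else f z) \<and> ell2_norm (\<lambda>z. if z \<in> F then 0 else f z) \<le> e"
proof -
  let ?g = "\<lambda>y. (cmod (f y))\<^sup>2"
  obtain X where X: "finite X" "dist (sum ?g X) (\<Sum>\<^sub>\<infinity>y. ?g y) \<le> e\<^sup>2"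
    using infsum_finite_approximation[of ?g UNIV "e\<^sup>2"] assms by (auto simp: in_ell2_def)
  show ?thesis
  proof (rule that[OF X(1)])
    fix F assume F: "finite F" "X \<subseteq> F"
    show "in_ell2 (\<lambda>z. if z \<in> F then 0 else f z) \<and> ell2_norm (\<lambda>z. if z \<in> F then 0 else f z) \<le> e"
    proof (rule ell2_norm_le_if_finite_sums_le)
      fix G :: "'a set" assume G: "finite G"
      have "(\<Sum>z\<in>G. (cmod (if z \<in> F then 0 else f z))\<^sup>2) = sum ?g (G - F)"
        using G by (intro sum.mono_neutral_cong_right) auto
      also have "\<dots> = sum ?g (G \<union> F) - sum ?g F"
        using G F(1) sum.union_disjoint[of "G - F" F ?g] by (simp add: Un_Diff_cancel2 Diff_Int_distrib2)
      also have "\<dots> \<le> (\<Sum>\<^sub>\<infinity>y. ?g y) - sum ?g X"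
      proof (rule diff_mono)
        show "sum ?g (G \<union> F) \<le> (\<Sum>\<^sub>\<infinity>y. ?g y)"
          using assms(1) G F(1) unfolding in_ell2_def by (intro finite_sum_le_infsum) auto
        show "sum ?g X \<le> sum ?g F"
          using F by (intro sum_mono2) auto
      qed
      also have "\<dots> \<le> e\<^sup>2"
        using X(2) by (simp add: dist_real_def)
      finally show "(\<Sum>z\<in>G. (cmod (if z \<in> F then 0 else f z))\<^sup>2) \<le> e\<^sup>2" .
    qed (use assms(2) in simp)
  qed
qed

lemma bounded_op_apply_split:
  assumes b: "bounded_op b" and F: "finite F" and f: "in_ell2 f"
  shows "b f x = (\<Sum>y\<in>F. f y * b (delta y) x) + b (\<lambda>z. if z \<in> F then 0 else f z) x"
proof -
  let ?k = "\<lambda>z. if z \<in> F then 0 else f z"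
  have p: "in_ell2 (\<lambda>z. \<Sum>y\<in>F. f y * delta y z)"
    by (rule in_ell2_finite_support[OF F]) (auto simp: delta_def intro!: sum.neutral)
  have k: "in_ell2 ?k"
    using ell2_norm_le_add_if_dominated[OF f in_ell2_zero, of ?k] by simp
  have "b f = b (\<lambda>z. (\<Sum>y\<in>F. f y * delta y z) + 1 * ?k z)"
    using F by (intro arg_cong[where f = b]) (simp add: fun_eq_iff delta_def if_distrib sum.delta' cong: if_cong)
  also have "\<dots> = (\<lambda>z. b (\<lambda>z. \<Sum>y\<in>F. f y * delta y z) z + 1 * b ?k z)"
    by (rule bounded_op_linear[OF b p k])
  finally show ?thesis
    using bounded_op_finite_sum[OF b F, of f] by simp
qed

lemma bounded_op_apply_eq_sum:
  assumes b: "bounded_op b" and S: "finite S" "\<And>y. y \<notin> S \<Longrightarrow> b (delta y) x = 0"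
    and f: "in_ell2 f"
  shows "b f x = (\<Sum>y\<in>S. f y * b (delta y) x)"
proof -
  obtain C where C: "C \<ge> 0" "\<And>f. in_ell2 f \<Longrightarrow> ell2_norm (b f) \<le> C * ell2_norm f"
    using bounded_op_bound[OF b] by blast
  have "cmod (b f x - (\<Sum>y\<in>S. f y * b (delta y) x)) \<le> 0 + e" if "e > 0" for e
  proof -
    obtain X where X: "finite X"
      "\<And>F. finite F \<Longrightarrow> X \<subseteq> F \<Longrightarrow> in_ell2 (\<lambda>z. if z \<in> F then 0 else f z) \<and>
        ell2_norm (\<lambda>z. if z \<in> F then 0 else f z) \<le> e / (C + 1)"
      using ell2_norm_tail_le[OF f, of "e / (C + 1)"] \<open>e > 0\<close> C(1) by auto
    define F where "F = X \<union> S"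
    let ?k = "\<lambda>z. if z \<in> F then 0 else f z"
    have F: "finite F" "X \<subseteq> F"
      using X(1) S(1) by (auto simp: F_def)
    have k: "in_ell2 ?k" "ell2_norm ?k \<le> e / (C + 1)"
      using X(2)[OF F] by auto
    have "(\<Sum>y\<in>F. f y * b (delta y) x) = (\<Sum>y\<in>S. f y * b (delta y) x)"
      using F(1) S(2) by (intro sum.mono_neutral_right) (auto simp: F_def)
    then have "cmod (b f x - (\<Sum>y\<in>S. f y * b (delta y) x)) = cmod (b ?k x)"
      using bounded_op_apply_split[OF b F(1) f, of x] by simp
    also have "\<dots> \<le> C * ell2_norm ?k"
      using norm_le_ell2_norm[OF bounded_op_in_ell2[OF b k(1)], of x] C(2)[OF k(1)] by linarith
    also have "\<dots> \<le> C * (e / (C + 1))"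
      using k(2) C(1) by (rule mult_left_mono)
    also have "\<dots> \<le> e"
      using C(1) \<open>e > 0\<close> by (simp add: field_simps)
    finally show ?thesis
      by simp
  qed
  then have "cmod (b f x - (\<Sum>y\<in>S. f y * b (delta y) x)) \<le> 0"
    by (rule field_le_epsilon)
  then show ?thesis
    by simp
qed

lemma sigma_apply_eq_sum:
  assumes "bounded_op b" "finite S" "\<And>y. y \<notin> S \<Longrightarrow> b (delta y) x = 0" "in_ell2 f"
  shows "sigma h t b f x = (\<Sum>y\<in>S. exp (\<i> * complex_of_real (t * (h x - h y))) * b (delta y) x * f y)"
proof -
  have phase: "exp (\<i> * complex_of_real (t * h x)) * exp (\<i> * complex_of_real (- t * h y))
      = exp (\<i> * complex_of_real (t * (h x - h y)))" for y
    by (simp add: algebra_simps flip: exp_add)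
  have "sigma h t b f x = exp (\<i> * complex_of_real (t * h x)) *
      (\<Sum>y\<in>S. exp (\<i> * complex_of_real (- t * h y)) * f y * b (delta y) x)"
    using bounded_op_apply_eq_sum[OF assms(1-3) exp_diag_isometric[OF assms(4), of h "- t", THEN conjunct1]]
    by (simp add: sigma_apply exp_diag_def)
  also have "\<dots> = (\<Sum>y\<in>S. (exp (\<i> * complex_of_real (t * h x)) *
      exp (\<i> * complex_of_real (- t * h y))) * b (delta y) x * f y)"
    by (simp add: sum_distrib_left mult_ac)
  finally show ?thesis
    by (simp only: phase)
qed

lemma sum_sum_symmetric_le:
  fixes g :: "'a \<Rightarrow> real"
  assumes "finite G" "\<And>x. finite (B x)" "\<And>x. card (B x) \<le> N" "\<And>x y. y \<in> B x \<longleftrightarrow> x \<in> B y"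
    and "\<And>y. g y \<ge> 0"
  shows "(\<Sum>x\<in>G. \<Sum>y\<in>B x. g y) \<le> real N * (\<Sum>y\<in>(\<Union>x\<in>G. B x). g y)"
proof -
  define U where "U = (\<Union>x\<in>G. B x)"
  have U: "finite U"
    using assms(1,2) by (simp add: U_def)
  have "(\<Sum>x\<in>G. \<Sum>y\<in>B x. g y) = (\<Sum>x\<in>G. \<Sum>y\<in>{y. y \<in> U \<and> y \<in> B x}. g y)"
    unfolding U_def by (intro sum.cong) auto
  also have "\<dots> = (\<Sum>y\<in>U. \<Sum>x\<in>{x. x \<in> G \<and> y \<in> B x}. g y)"
    by (rule sum.swap_restrict[OF assms(1) U])
  also have "\<dots> \<le> (\<Sum>y\<in>U. real N * g y)"
  proof (rule sum_mono)
    fix y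
    have "card {x. x \<in> G \<and> y \<in> B x} \<le> card (B y)"
      using assms(2,4) by (intro card_mono) auto
    then have "card {x. x \<in> G \<and> y \<in> B x} \<le> N"
      using assms(3) le_trans by blast
    then show "(\<Sum>x\<in>{x. x \<in> G \<and> y \<in> B x}. g y) \<le> real N * g y"
      using assms(5) by (simp add: mult_right_mono)
  qed
  finally show ?thesis
    by (simp add: U_def sum_distrib_left)
qed

lemma ell2_norm_banded_le:
  assumes f: "in_ell2 f"
    and B: "\<And>x. finite (B x)" "\<And>x. card (B x) \<le> N" "\<And>x y. y \<in> B x \<longleftrightarrow> x \<in> B y"
    and m: "\<And>x y. y \<in> B x \<Longrightarrow> cmod (m x y) \<le> M" and "M \<ge> 0"
  shows "in_ell2 (\<lambda>x. \<Sum>y\<in>B x. m x y * f y) \<and>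
    ell2_norm (\<lambda>x. \<Sum>y\<in>B x. m x y * f y) \<le> M * real N * ell2_norm f"
proof (rule ell2_norm_le_if_finite_sums_le)
  show "0 \<le> M * real N * ell2_norm f"
    using \<open>M \<ge> 0\<close> by (simp add: ell2_norm_nonneg)
  fix G :: "'a set" assume G: "finite G"
  let ?F = "\<lambda>y. (cmod (f y))\<^sup>2"
  have row: "(cmod (\<Sum>y\<in>B x. m x y * f y))\<^sup>2 \<le> M\<^sup>2 * real N * (\<Sum>y\<in>B x. ?F y)" for x
  proof -
    have "cmod (\<Sum>y\<in>B x. m x y * f y) \<le> (\<Sum>y\<in>B x. M * cmod (f y))"
      using m by (intro order_trans[OF norm_sum] sum_mono) (simp add: norm_mult mult_right_mono)
    then have "(cmod (\<Sum>y\<in>B x. m x y * f y))\<^sup>2 \<le> (\<Sum>y\<in>B x. M * cmod (f y))\<^sup>2"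
      by (simp add: power_mono)
    also have "\<dots> \<le> (\<Sum>y\<in>B x. (M * cmod (f y))\<^sup>2) * real (card (B x))"
      by (rule sum_squared_le_sum_of_squares)
    also have "\<dots> = M\<^sup>2 * (\<Sum>y\<in>B x. ?F y) * real (card (B x))"
      by (simp add: power_mult_distrib sum_distrib_left)
    also have "\<dots> \<le> M\<^sup>2 * (\<Sum>y\<in>B x. ?F y) * real N"
      using B(2)[of x] by (intro mult_left_mono) (auto simp: sum_nonneg)
    finally show ?thesis
      by (simp add: mult_ac)
  qed
  have "(\<Sum>x\<in>G. (cmod (\<Sum>y\<in>B x. m x y * f y))\<^sup>2) \<le> (\<Sum>x\<in>G. M\<^sup>2 * real N * (\<Sum>y\<in>B x. ?F y))"
    by (intro sum_mono row)
  also have "\<dots> = M\<^sup>2 * real N * (\<Sum>x\<in>G. \<Sum>y\<in>B x. ?F y)"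
    by (simp add: sum_distrib_left)
  also have "\<dots> \<le> M\<^sup>2 * real N * (real N * (\<Sum>y\<in>(\<Union>x\<in>G. B x). ?F y))"
    by (rule mult_left_mono[OF sum_sum_symmetric_le[OF G B]]) simp_all
  also have "\<dots> \<le> M\<^sup>2 * real N * (real N * (ell2_norm f)\<^sup>2)"
    using sum_power2_le_ell2_norm[OF f, of "\<Union>x\<in>G. B x"] G B(1) by (intro mult_left_mono) auto
  also have "\<dots> = (M * real N * ell2_norm f)\<^sup>2"
    by (simp add: power2_eq_square)
  finally show "(\<Sum>x\<in>G. (cmod (\<Sum>y\<in>B x. m x y * f y))\<^sup>2) \<le> (M * real N * ell2_norm f)\<^sup>2" .
qed

lemma norm_exp_i_diff_le:
  "cmod (exp (\<i> * complex_of_real a) - exp (\<i> * complex_of_real b)) \<le> \<bar>a - b\<bar>"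
proof -
  define t where "t = a - b"
  have "exp (\<i> * complex_of_real t) = Complex (cos t) (sin t)"
    by (simp add: exp_eq_polar cis.code)
  then have "(cmod (exp (\<i> * complex_of_real t) - 1))\<^sup>2 = (cos t - 1)\<^sup>2 + (sin t)\<^sup>2"
    by (simp add: cmod_def)
  also have "\<dots> = 4 * (sin (t/2))\<^sup>2"
    using cos_double_sin[of "t/2"] by (simp add: power2_eq_square algebra_simps sin_squared_eq)
  also have "\<dots> \<le> 4 * (t/2)\<^sup>2"
    using power_mono[OF abs_sin_x_le_abs_x[of "t/2"] abs_ge_zero, of 2] by (simp add: power_divide)
  also have "\<dots> = t\<^sup>2"
    by (simp add: power2_eq_square)
  finally have "cmod (exp (\<i> * complex_of_real t) - 1) \<le> \<bar>t\<bar>"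
    by (simp add: abs_le_square_iff[symmetric])
  moreover have "exp (\<i> * complex_of_real a) - exp (\<i> * complex_of_real b)
      = exp (\<i> * complex_of_real b) * (exp (\<i> * complex_of_real t) - 1)"
    by (simp add: t_def algebra_simps flip: exp_add)
  ultimately show ?thesis
    by (simp add: norm_mult t_def)
qed

lemma op_norm_sigma_diff_le_banded:
  fixes h :: "'a::metric_space \<Rightarrow> real"
  assumes b: "bounded_op b" "\<And>x y. y \<notin> ball x r \<Longrightarrow> b (delta y) x = 0"
    and N: "\<And>x::'a. finite (ball x r)" "\<And>x::'a. card (ball x r) \<le> N"
    and s: "s \<ge> 0" "\<And>x y. dist x y < r \<Longrightarrow> \<bar>h x - h y\<bar> \<le> s"
  shows "op_norm (op_diff (sigma h t b) (sigma h t0 b)) \<le> s * op_norm b * real N * \<bar>t - t0\<bar>"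
proof (rule op_norm_le)
  fix f :: "'a \<Rightarrow> complex" assume f: "in_ell2 f" "ell2_norm f \<le> 1"
  define m where "m x y = (exp (\<i> * complex_of_real (t * (h x - h y)))
      - exp (\<i> * complex_of_real (t0 * (h x - h y)))) * b (delta y) x" for x y
  have "sigma h \<tau> b f x = (\<Sum>y\<in>ball x r. exp (\<i> * complex_of_real (\<tau> * (h x - h y))) * b (delta y) x * f y)"
    for \<tau> x
    by (rule sigma_apply_eq_sum) (use b N(1) f(1) in auto)
  then have matrix: "op_diff (sigma h t b) (sigma h t0 b) f = (\<lambda>x. \<Sum>y\<in>ball x r. m x y * f y)"
    by (simp add: fun_eq_iff op_diff_def m_def sum_subtractf[symmetric] algebra_simps)
  have "cmod (m x y) \<le> \<bar>t - t0\<bar> * s * op_norm b" if "y \<in> ball x r" for x y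
  proof -
    have "cmod (m x y) \<le> \<bar>t * (h x - h y) - t0 * (h x - h y)\<bar> * op_norm b"
      unfolding m_def norm_mult
      by (intro mult_mono norm_exp_i_diff_le norm_matrix_entry_le_op_norm b(1)) auto
    also have "\<dots> = \<bar>t - t0\<bar> * \<bar>h x - h y\<bar> * op_norm b"
      by (simp add: abs_mult[symmetric] left_diff_distrib)
    also have "\<dots> \<le> \<bar>t - t0\<bar> * s * op_norm b"
      using s(2)[of x y] that op_norm_nonneg[OF b(1)]
      by (intro mult_right_mono mult_left_mono) (auto simp: mem_ball)
    finally show ?thesis .
  qed
  then have "ell2_norm (op_diff (sigma h t b) (sigma h t0 b) f) \<le> \<bar>t - t0\<bar> * s * op_norm b * real N * ell2_norm f"
    unfolding matrix using N s(1) op_norm_nonneg[OF b(1)]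
    by (intro ell2_norm_banded_le[OF f(1), THEN conjunct2]) (auto simp: mem_ball dist_commute)
  also have "\<dots> \<le> \<bar>t - t0\<bar> * s * op_norm b * real N * 1"
    using f(2) s(1) op_norm_nonneg[OF b(1)] by (intro mult_left_mono mult_nonneg_nonneg) auto
  finally show "ell2_norm (op_diff (sigma h t b) (sigma h t0 b) f) \<le> s * op_norm b * real N * \<bar>t - t0\<bar>"
    by (simp add: mult_ac)
qed

lemma op_norm_sigma_diff_le_finite_propagation:
  fixes h :: "'a::metric_space \<Rightarrow> real"
  assumes "ulf TYPE('a)" "coarse_fun h" "bounded_op b" "finite_propagation b"
  obtains K where "K \<ge> 0" "\<And>t t0. op_norm (op_diff (sigma h t b) (sigma h t0 b)) \<le> K * \<bar>t - t0\<bar>"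
proof -
  obtain R where R: "\<And>x y. b (delta y) x \<noteq> 0 \<Longrightarrow> dist x y \<le> R"
    using assms(4) unfolding finite_propagation_def by blast
  define r where "r = \<bar>R\<bar> + 1"
  have r: "r > 0" "R < r"
    by (auto simp: r_def)
  have outside: "b (delta y) x = 0" if "y \<notin> ball x r" for x y
    using R r(2) that by (meson le_less_trans mem_ball)
  obtain N :: nat where N: "\<And>x::'a. finite (ball x r) \<and> card (ball x r) \<le> N"
    using assms(1) r(1) unfolding ulf_def by blast
  obtain s where s: "s > 0" "\<And>x y. dist x y < r \<Longrightarrow> \<bar>h x - h y\<bar> < s"
    using assms(2) r(1) unfolding coarse_fun_def by blast
  show ?thesis
  proof (rule that)
    show "0 \<le> s * op_norm b * real N"
      using s(1) op_norm_nonneg[OF assms(3)] by simp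
    show "op_norm (op_diff (sigma h t b) (sigma h t0 b)) \<le> s * op_norm b * real N * \<bar>t - t0\<bar>" for t t0
      using assms(3) outside N s by (intro op_norm_sigma_diff_le_banded) (auto intro: less_imp_le)
  qed
qed

lemma op_norm_sigma_diff_le_approx:
  assumes "bounded_op a" "bounded_op b"
  shows "op_norm (op_diff (sigma h t a) (sigma h t0 a))
    \<le> 2 * op_norm (op_diff a b) + op_norm (op_diff (sigma h t b) (sigma h t0 b))"
proof -
  have bounded: "bounded_op (sigma h s a)" "bounded_op (sigma h s b)" for s
    using assms by (simp_all add: bounded_op_sigma)
  have approx: "op_norm (op_diff (sigma h s a) (sigma h s b)) \<le> op_norm (op_diff a b)" for s
    using op_norm_sigma_le[OF bounded_op_op_diff[OF assms], of h s] by (simp add: op_diff_sigma)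
  have "op_norm (op_diff (sigma h t a) (sigma h t0 a))
      \<le> op_norm (op_diff (sigma h t a) (sigma h t b)) + op_norm (op_diff (sigma h t b) (sigma h t0 a))"
    using bounded by (intro op_norm_diff_triangle)
  also have "\<dots> \<le> op_norm (op_diff (sigma h t a) (sigma h t b))
      + (op_norm (op_diff (sigma h t b) (sigma h t0 b)) + op_norm (op_diff (sigma h t0 b) (sigma h t0 a)))"
    using bounded by (intro add_left_mono op_norm_diff_triangle)
  finally show ?thesis
    using approx[of t] approx[of t0] op_norm_diff_commute[of "sigma h t0 b" "sigma h t0 a"] by linarith
qed

theorem proposition2p1:
  fixes h :: "'a::metric_space \<Rightarrow> real"
  assumes "ulf TYPE('a)"
    and "coarse_fun h"
    and "a \<in> uniform_roe"
  shows "(\<forall>t. sigma h t a \<in> uniform_roe) \<and>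
         (\<forall>t0. \<forall>\<epsilon>>0. \<exists>\<delta>>0. \<forall>t. \<bar>t - t0\<bar> < \<delta> \<longrightarrow>
             op_norm (op_diff (sigma h t a) (sigma h t0 a)) < \<epsilon>)"
proof (intro conjI allI impI)
  show "sigma h t a \<in> uniform_roe" for t
    using sigma_uniform_roe[OF assms(3)] .
  fix t0 \<epsilon> :: real assume "\<epsilon> > 0"
  then have "\<epsilon> / 3 > 0"
    by simp
  then obtain b where b: "bounded_op b" "finite_propagation b" "op_norm (op_diff a b) < \<epsilon> / 3"
    using assms(3) unfolding uniform_roe_def by blast
  obtain K where K: "K \<ge> 0" "\<And>t t0. op_norm (op_diff (sigma h t b) (sigma h t0 b)) \<le> K * \<bar>t - t0\<bar>"
    using op_norm_sigma_diff_le_finite_propagation[OF assms(1,2) b(1,2)] by blast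
  define \<delta> where "\<delta> = \<epsilon> / (3 * (K + 1))"
  have "op_norm (op_diff (sigma h t a) (sigma h t0 a)) < \<epsilon>" if "\<bar>t - t0\<bar> < \<delta>" for t
  proof -
    have "K * \<bar>t - t0\<bar> \<le> (K + 1) * \<bar>t - t0\<bar>"
      by (simp add: mult_right_mono)
    also have "\<dots> < (K + 1) * \<delta>"
      using that K(1) by (intro mult_strict_left_mono) auto
    also have "\<dots> = \<epsilon> / 3"
      using K(1) by (simp add: \<delta>_def field_simps)
    finally show ?thesis
      using op_norm_sigma_diff_le_approx[OF _ b(1), of a h t t0] assms(3) b(3) K(2)[of t t0]
      by (simp add: uniform_roe_def)
  qed
  moreover have "\<delta> > 0"
    using \<open>\<epsilon> > 0\<close> K(1) by (simp add: \<delta>_def)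
  ultimately show "\<exists>\<delta>>0. \<forall>t. \<bar>t - t0\<bar> < \<delta> \<longrightarrow> op_norm (op_diff (sigma h t a) (sigma h t0 a)) < \<epsilon>"
    by blast
qed

end
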